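(* Let $\Sigma$ be a finite ranked set (arities $\ge1$), $X$ a ranked set and $G\in\mathsf{V}X$. Then there is an operation $f$, taking an arity-respecting $X$-indexed family of models (for each $x\in X$, a model in the image of $\lfloor\cdot\rfloor$ on elements of $\mathsf{V}\Sigma$ of the arity of $x$) to a model, which is compatible with counting MSO and satisfies $f\big((\lfloor\eta(x)\rfloor)_{x\in X}\big)=\lfloor[\![G]\!](\eta)\rfloor$ (up to isomorphism) for every arity-preserving valuation $\eta:X\to\mathsf{V}\Sigma$.
   Context: Here a ranked set is a set whose elements have arities in $\{1,2,\dots\}$. A corner of a ranked set $V$ is $v[i]$ with $v\in V$, $1\le i\le$ arity of $v$. For $n\ge1$, an $n$-ary $\mathsf{V}$-hypergraph with ports over $\Sigma$ consists of a nonempty finite ranked set of hypervertices, an arity-preserving labelling by $\Sigma$, a binary directed edge relation on corners, and a total port function from corners to $\{1,\dots,n\}$ (corners mapped to $i$ are $i$-ports). $\mathsf{V}\Sigma$ denotes these up to isomorphism. Flattening of $K\in\mathsf{V}\mathsf{V}\Sigma$: hypervertices are pairs $(v,w)$, $v$ a hypervertex of $K$, $w$ a hypervertex of the label of $v$ (label and arity from $w$); arity that of $K$; if $w[i]$ is a $j$-port in the label of $v$ and $v[j]$ is a $k$-port in $K$, then $(v,w)[i]$ is a $k$-port; an edge $(v,w)[i]\to(v',w')[i']$ exists iff $v=v'$ and $w[i]\to w'[i']$ in the label of $v$, or $v[j]\to v'[j']$ in $K$ with $j,j'$ the port numbers of $w[i]$, $w'[i']$ in the labels of $v,v'$. $[\![G]\!](\eta)$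 is the flattening of $G$ with each label $x$ replaced by $\eta(x)$. For $K\in\mathsf{V}\Sigma$, the model $\lfloor K\rfloor$ has as universe the corners of the hypervertices, a binary relation for edges, for each $a\in\Sigma$ and $i\le$ arity of $a$ a unary relation selecting the $i$-th corners of hypervertices labelled $a$, and for each $i\le$ arity of $K$ a unary relation for the $i$-ports. Counting MSO (extended syntax) is MSO with predicates $|Y|\equiv k\bmod m$ (true iff $Y$ finite of size $\equiv k$ mod $m$), a set-inclusion predicate, a singleton predicate, and set constants $[\psi]$ for each quantifier-free formula $\psi(x)$ with one free variable; quantifier rank counts first- and second-order quantifiers alike. Two models are $(r,M)$-equivalent if they satisfy the same such sentences of quantifier rank at most $r$ using moduli only from $M\subseteq\mathbb{N}$. An operation on families of models is compatible with counting MSO if for all $r\in\mathbb{N}$ and $M\subseteq\mathbb{N}$, componentwise $(r,M)$-equivalent inputs give $(r,M)$-equivalent outputs. *)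

theory Defs
  imports Main
begin

definition ranked :: "'a set \<Rightarrow> ('a \<Rightarrow> nat) \<Rightarrow> bool" where
  "ranked A ar \<longleftrightarrow> (\<forall>a\<in>A. 1 \<le> ar a)"

text \<open>The arity of a hypervertex is the arity
  of its label (arity-preserving labelling).\<close>
record ('v, 'l) hg =
  hverts :: "'v set"
  hlab   :: "'v \<Rightarrow> 'l"
  hedge  :: "(('v \<times> nat) \<times> ('v \<times> nat)) set"
  hport  :: "'v \<times> nat \<Rightarrow> nat"
  harity :: nat

definition corners :: "('l \<Rightarrow> nat) \<Rightarrow> ('v, 'l) hg \<Rightarrow> ('v \<times> nat) set" where
  "corners ar K = {(v, i). v \<in> hverts K \<and> 1 \<le> i \<and> i \<le> ar (hlab K v)}"

definition wf_hg :: "'l set \<Rightarrow> ('l \<Rightarrow> nat) \<Rightarrow> ('v, 'l) hg \<Rightarrow> bool" where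
  "wf_hg L ar K \<longleftrightarrow>
     1 \<le> harity K \<and>
     finite (hverts K) \<and> hverts K \<noteq> {} \<and>
     (\<forall>v\<in>hverts K. hlab K v \<in> L) \<and>
     hedge K \<subseteq> corners ar K \<times> corners ar K \<and>
     (\<forall>c\<in>corners ar K. 1 \<le> hport K c \<and> hport K c \<le> harity K)"

definition valuation :: "'s set \<Rightarrow> ('s \<Rightarrow> nat) \<Rightarrow> 'x set \<Rightarrow> ('x \<Rightarrow> nat)
    \<Rightarrow> ('x \<Rightarrow> ('v, 's) hg) \<Rightarrow> bool" where
  "valuation S arS X arX \<eta> \<longleftrightarrow> (\<forall>x\<in>X. wf_hg S arS (\<eta> x) \<and> harity (\<eta> x) = arX x)"

definition flatten :: "('s \<Rightarrow> nat) \<Rightarrow> ('w, 'x) hg \<Rightarrow> ('x \<Rightarrow> ('v, 's) hg)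
    \<Rightarrow> ('w \<times> 'v, 's) hg" where
  "flatten arS G \<eta> =
    (let lab = (\<lambda>(v, w). hlab (\<eta> (hlab G v)) w);
         pt  = (\<lambda>((v, w), i). hport (\<eta> (hlab G v)) (w, i));
         V   = {(v, w). v \<in> hverts G \<and> w \<in> hverts (\<eta> (hlab G v))};
         C   = {(u, i). u \<in> V \<and> 1 \<le> i \<and> i \<le> arS (lab u)}
     in \<lparr> hverts = V,
          hlab = lab,
          hedge = {(((v, w), i), ((v', w'), i')).
                     ((v, w), i) \<in> C \<and> ((v', w'), i') \<in> C \<and>
                     ((v = v' \<and> ((w, i), (w', i')) \<in> hedge (\<eta> (hlab G v))) \<or>
                      ((v, pt ((v, w), i)), (v', pt ((v', w'), i'))) \<in> hedge G)},
          hport = (\<lambda>((v, w), i). hport G (v, pt ((v, w), i))),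
          harity = harity G \<rparr>)"

record ('u, 'p) model =
  univ :: "'u set"
  brel :: "('u \<times> 'u) set"
  upred :: "'p \<Rightarrow> 'u set"

definition to_model :: "('s \<Rightarrow> nat) \<Rightarrow> ('v, 's) hg \<Rightarrow> ('v \<times> nat, ('s \<times> nat) + nat) model" where
  "to_model ar K =
     \<lparr> univ = corners ar K,
       brel = hedge K,
       upred = (\<lambda>p. case p of
                   Inl (a, i) \<Rightarrow> {(v, j) \<in> corners ar K. hlab K v = a \<and> j = i}
                 | Inr i \<Rightarrow> {c \<in> corners ar K. 1 \<le> i \<and> i \<le> harity K \<and> hport K c = i}) \<rparr>"

definition iso_model :: "('u, 'p) model \<Rightarrow> ('u2, 'p) model \<Rightarrow> bool" where
  "iso_model A B \<longleftrightarrow> (\<exists>h. bij_betw h (univ A) (univ B) \<and>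
      (\<forall>a\<in>univ A. \<forall>b\<in>univ A. (a, b) \<in> brel A \<longleftrightarrow> (h a, h b) \<in> brel B) \<and>
      (\<forall>p. \<forall>a\<in>univ A. a \<in> upred A p \<longleftrightarrow> h a \<in> upred B p))"

text \<open>Quantifier-free formulas with the single free first-order variable x.\<close>
datatype 'p qf =
    QEq
  | QEdge
  | QPred 'p
  | QNot "'p qf"
  | QAnd "'p qf" "'p qf"

datatype 'p sterm = SVar nat | SConst "'p qf"

datatype 'p fm =
    Eq nat nat
  | Edge nat nat
  | Pred 'p nat
  | Mem nat "'p sterm"
  | CardMod "'p sterm" nat nat
  | Subset "'p sterm" "'p sterm"
  | Single "'p sterm"
  | Neg "'p fm"
  | Conj "'p fm" "'p fm"
  | ExFO nat "'p fm"
  | ExSO nat "'p fm"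

primrec qf_sat :: "('u, 'p) model \<Rightarrow> 'p qf \<Rightarrow> 'u \<Rightarrow> bool" where
  "qf_sat A QEq a = True"
| "qf_sat A QEdge a = ((a, a) \<in> brel A)"
| "qf_sat A (QPred p) a = (a \<in> upred A p)"
| "qf_sat A (QNot \<psi>) a = (\<not> qf_sat A \<psi> a)"
| "qf_sat A (QAnd \<psi> \<chi>) a = (qf_sat A \<psi> a \<and> qf_sat A \<chi> a)"

primrec sval :: "('u, 'p) model \<Rightarrow> (nat \<Rightarrow> 'u set) \<Rightarrow> 'p sterm \<Rightarrow> 'u set" where
  "sval A V (SVar j) = V j"
| "sval A V (SConst \<psi>) = {a \<in> univ A. qf_sat A \<psi> a}"

primrec sat :: "('u, 'p) model \<Rightarrow> (nat \<Rightarrow> 'u) \<Rightarrow> (nat \<Rightarrow> 'u set) \<Rightarrow> 'p fm \<Rightarrow> bool" where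
  "sat A v V (Eq i j) = (v i = v j)"
| "sat A v V (Edge i j) = ((v i, v j) \<in> brel A)"
| "sat A v V (Pred p i) = (v i \<in> upred A p)"
| "sat A v V (Mem i T) = (v i \<in> sval A V T)"
| "sat A v V (CardMod T k m) = (finite (sval A V T) \<and> card (sval A V T) mod m = k mod m)"
| "sat A v V (Subset T T') = (sval A V T \<subseteq> sval A V T')"
| "sat A v V (Single T) = (\<exists>a. sval A V T = {a})"
| "sat A v V (Neg \<phi>) = (\<not> sat A v V \<phi>)"
| "sat A v V (Conj \<phi> \<psi>) = (sat A v V \<phi> \<and> sat A v V \<psi>)"
| "sat A v V (ExFO i \<phi>) = (\<exists>a\<in>univ A. sat A (v(i := a)) V \<phi>)"
| "sat A v V (ExSO j \<phi>) = (\<exists>S. S \<subseteq> univ A \<and> sat A v (V(j := S)) \<phi>)"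

primrec svars_t :: "'p sterm \<Rightarrow> nat set" where
  "svars_t (SVar j) = {j}"
| "svars_t (SConst \<psi>) = {}"

primrec ffv :: "'p fm \<Rightarrow> nat set" where
  "ffv (Eq i j) = {i, j}"
| "ffv (Edge i j) = {i, j}"
| "ffv (Pred p i) = {i}"
| "ffv (Mem i T) = {i}"
| "ffv (CardMod T k m) = {}"
| "ffv (Subset T T') = {}"
| "ffv (Single T) = {}"
| "ffv (Neg \<phi>) = ffv \<phi>"
| "ffv (Conj \<phi> \<psi>) = ffv \<phi> \<union> ffv \<psi>"
| "ffv (ExFO i \<phi>) = ffv \<phi> - {i}"
| "ffv (ExSO j \<phi>) = ffv \<phi>"

primrec sfv :: "'p fm \<Rightarrow> nat set" where
  "sfv (Eq i j) = {}"
| "sfv (Edge i j) = {}"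
| "sfv (Pred p i) = {}"
| "sfv (Mem i T) = svars_t T"
| "sfv (CardMod T k m) = svars_t T"
| "sfv (Subset T T') = svars_t T \<union> svars_t T'"
| "sfv (Single T) = svars_t T"
| "sfv (Neg \<phi>) = sfv \<phi>"
| "sfv (Conj \<phi> \<psi>) = sfv \<phi> \<union> sfv \<psi>"
| "sfv (ExFO i \<phi>) = sfv \<phi>"
| "sfv (ExSO j \<phi>) = sfv \<phi> - {j}"

primrec qrank :: "'p fm \<Rightarrow> nat" where
  "qrank (Eq i j) = 0"
| "qrank (Edge i j) = 0"
| "qrank (Pred p i) = 0"
| "qrank (Mem i T) = 0"
| "qrank (CardMod T k m) = 0"
| "qrank (Subset T T') = 0"
| "qrank (Single T) = 0"
| "qrank (Neg \<phi>) = qrank \<phi>"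
| "qrank (Conj \<phi> \<psi>) = max (qrank \<phi>) (qrank \<psi>)"
| "qrank (ExFO i \<phi>) = Suc (qrank \<phi>)"
| "qrank (ExSO j \<phi>) = Suc (qrank \<phi>)"

primrec moduli :: "'p fm \<Rightarrow> nat set" where
  "moduli (Eq i j) = {}"
| "moduli (Edge i j) = {}"
| "moduli (Pred p i) = {}"
| "moduli (Mem i T) = {}"
| "moduli (CardMod T k m) = {m}"
| "moduli (Subset T T') = {}"
| "moduli (Single T) = {}"
| "moduli (Neg \<phi>) = moduli \<phi>"
| "moduli (Conj \<phi> \<psi>) = moduli \<phi> \<union> moduli \<psi>"
| "moduli (ExFO i \<phi>) = moduli \<phi>"
| "moduli (ExSO j \<phi>) = moduli \<phi>"

definition sentence :: "'p fm \<Rightarrow> bool" where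
  "sentence \<phi> \<longleftrightarrow> ffv \<phi> = {} \<and> sfv \<phi> = {}"

definition holds :: "('u, 'p) model \<Rightarrow> 'p fm \<Rightarrow> bool" where
  "holds A \<phi> \<longleftrightarrow> sat A (\<lambda>_. undefined) (\<lambda>_. {}) \<phi>"

definition rM_equiv :: "nat \<Rightarrow> nat set \<Rightarrow> ('u, 'p) model \<Rightarrow> ('u2, 'p) model \<Rightarrow> bool" where
  "rM_equiv r M A B \<longleftrightarrow>
     (\<forall>\<phi>. sentence \<phi> \<and> qrank \<phi> \<le> r \<and> moduli \<phi> \<subseteq> M \<longrightarrow> (holds A \<phi> \<longleftrightarrow> holds B \<phi>))"

definition cmso_compatible :: "'x set \<Rightarrow> ('x \<Rightarrow> ('u, 'p) model set)
    \<Rightarrow> (('x \<Rightarrow> ('u, 'p) model) \<Rightarrow> ('u2, 'q) model) \<Rightarrow> bool" where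
  "cmso_compatible X D f \<longleftrightarrow>
     (\<forall>r M m m'. (\<forall>x\<in>X. m x \<in> D x \<and> m' x \<in> D x \<and> rM_equiv r M (m x) (m' x))
                 \<longrightarrow> rM_equiv r M (f m) (f m'))"

end

theory Submission
  imports Defs
begin

text \<open>The operation is composition along G: the disjoint union of the component models
  m (hlab G v), v \<in> hverts G, together with the edges and ports that G induces on port corners.
  It sees the components only through their models, and on models of hypergraphs it is exactly
  the model of the flattening.  Compatibility with counting MSO is a Feferman-Vaught argument:
  a quantifier-free property of a corner is expressible inside its component, a set of corners
  splits into its fibres over the hypervertices of G (whose cardinalities add up modulo any
  modulus), and componentwise equivalence is carried through the quantifiers by a
  back-and-forth argument.  All models involved are finite, so a missing witness is always refuted by a finite conjunction
  of formulas of bounded rank.\<close>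

section \<open>Equivalence with respect to a fragment\<close>

lemma sval_cong: "(\<And>j. j \<in> svars_t T \<Longrightarrow> S j = S' j) \<Longrightarrow> sval A S T = sval A S' T"
  by (cases T) auto

lemma sat_cong:
  "(\<And>i. i \<in> ffv \<phi> \<Longrightarrow> a i = a' i) \<Longrightarrow> (\<And>j. j \<in> sfv \<phi> \<Longrightarrow> S j = S' j)
   \<Longrightarrow> sat A a S \<phi> = sat A a' S' \<phi>"
proof (induction \<phi> arbitrary: a a' S S')
  case (Mem i T)
  then show ?case using sval_cong[of T S S' A] by simp
next
  case (CardMod T k m)
  then show ?case using sval_cong[of T S S' A] by simp
next
  case (Subset T T')
  then show ?case using sval_cong[of T S S' A] sval_cong[of T' S S' A] by simp
next
  case (Single T)
  then show ?case using sval_cong[of T S S' A] by simp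
next
  case (Neg \<phi>)
  have "sat A a S \<phi> = sat A a' S' \<phi>"
    by (rule Neg.IH) (use Neg.prems in simp_all)
  then show ?case by simp
next
  case (Conj \<phi> \<psi>)
  have "sat A a S \<phi> = sat A a' S' \<phi>" "sat A a S \<psi> = sat A a' S' \<psi>"
    by (rule Conj.IH; use Conj.prems in simp)+
  then show ?case by simp
next
  case (ExFO i \<phi>)
  then have "sat A (a(i := c)) S \<phi> = sat A (a'(i := c)) S' \<phi>" for c
    by (intro ExFO.IH) auto
  then show ?case by simp
next
  case (ExSO j \<phi>)
  then have "sat A a (S(j := Y)) \<phi> = sat A a' (S'(j := Y)) \<phi>" for Y
    by (intro ExSO.IH) auto
  then show ?case by simp
qed simp_all

definition in_fragment :: "nat \<Rightarrow> nat set \<Rightarrow> nat set \<Rightarrow> nat set \<Rightarrow> 'p fm \<Rightarrow> bool" where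
  "in_fragment r M F SV \<phi> \<longleftrightarrow> qrank \<phi> \<le> r \<and> moduli \<phi> \<subseteq> M \<and> ffv \<phi> \<subseteq> F \<and> sfv \<phi> \<subseteq> SV"

definition frag_equiv :: "nat \<Rightarrow> nat set \<Rightarrow> nat set \<Rightarrow> nat set \<Rightarrow> ('u, 'p) model \<Rightarrow> (nat \<Rightarrow> 'u)
    \<Rightarrow> (nat \<Rightarrow> 'u set) \<Rightarrow> ('u2, 'p) model \<Rightarrow> (nat \<Rightarrow> 'u2) \<Rightarrow> (nat \<Rightarrow> 'u2 set) \<Rightarrow> bool" where
  "frag_equiv r M F SV A a S B b T \<longleftrightarrow>
     (\<forall>\<phi>. in_fragment r M F SV \<phi> \<longrightarrow> (sat A a S \<phi> \<longleftrightarrow> sat B b T \<phi>))"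

lemma frag_equiv_sym: "frag_equiv r M F SV A a S B b T \<Longrightarrow> frag_equiv r M F SV B b T A a S"
  unfolding frag_equiv_def by blast

lemma frag_equivD:
  "frag_equiv r M F SV A a S B b T \<Longrightarrow> in_fragment r M F SV \<phi> \<Longrightarrow> sat A a S \<phi> = sat B b T \<phi>"
  unfolding frag_equiv_def by blast

lemma frag_equiv_mono:
  assumes "frag_equiv r M F SV A a S B b T" "r' \<le> r" "F' \<subseteq> F"
  shows "frag_equiv r' M F' SV A a S B b T"
  using assms unfolding frag_equiv_def in_fragment_def by auto

lemma frag_equiv_fun_upd:
  fixes A :: "('u, 'p) model"
  assumes "frag_equiv r M F SV A a S B b T" "i \<notin> F"
  shows "frag_equiv r M F SV A (a(i := c)) S B (b(i := d)) T"
  unfolding frag_equiv_def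
proof (intro allI impI)
  fix \<phi> :: "'p fm" assume \<phi>: "in_fragment r M F SV \<phi>"
  then have "i \<notin> ffv \<phi>" using assms(2) by (auto simp: in_fragment_def)
  then have "sat A (a(i := c)) S \<phi> = sat A a S \<phi>" "sat B (b(i := d)) T \<phi> = sat B b T \<phi>"
    by (auto intro!: sat_cong)
  then show "sat A (a(i := c)) S \<phi> = sat B (b(i := d)) T \<phi>"
    using frag_equivD[OF assms(1) \<phi>] by simp
qed

lemma rM_equiv_iff_frag_equiv: "rM_equiv r M A B \<longleftrightarrow> frag_equiv r M {} {} A a S B b T"
proof -
  have "holds A \<phi> = sat A a S \<phi>" "holds B \<phi> = sat B b T \<phi>" if "sentence \<phi>" for \<phi>
    using that unfolding holds_def sentence_def by (auto intro!: sat_cong)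
  then show ?thesis
    unfolding rM_equiv_def frag_equiv_def in_fragment_def sentence_def by auto
qed

lemma separating_formula:
  assumes "finite D" "\<And>d. d \<in> D \<Longrightarrow> \<not> frag_equiv r M F SV A a S B (b d) (T d)"
  shows "\<exists>\<psi>. in_fragment r M F SV \<psi> \<and> sat A a S \<psi> \<and> (\<forall>d\<in>D. \<not> sat B (b d) (T d) \<psi>)"
  using assms
proof (induction D rule: finite_induct)
  case empty
  show ?case
    by (rule exI[of _ "Subset (SConst QEq) (SConst QEq)"]) (auto simp: in_fragment_def)
next
  case (insert d D)
  then obtain \<Psi> where \<Psi>: "in_fragment r M F SV \<Psi>" "sat A a S \<Psi>" "\<forall>d\<in>D. \<not> sat B (b d) (T d) \<Psi>"
    by auto
  from insert.prems obtain \<phi> where \<phi>: "in_fragment r M F SV \<phi>" "sat A a S \<phi> \<noteq> sat B (b d) (T d) \<phi>"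
    unfolding frag_equiv_def by blast
  define \<psi> where "\<psi> = (if sat A a S \<phi> then \<phi> else Neg \<phi>)"
  have "in_fragment r M F SV \<psi>" "sat A a S \<psi>" "\<not> sat B (b d) (T d) \<psi>"
    using \<phi> by (auto simp: \<psi>_def in_fragment_def)
  with \<Psi> show ?case
    by (intro exI[of _ "Conj \<psi> \<Psi>"]) (auto simp: in_fragment_def)
qed

lemma frag_equiv_forth_FO:
  assumes "finite (univ B)" "frag_equiv (Suc r) M F SV A a S B b T" "c \<in> univ A"
  shows "\<exists>d\<in>univ B. frag_equiv r M (insert i F) SV A (a(i := c)) S B (b(i := d)) T"
proof (rule ccontr)
  assume "\<not> ?thesis"
  then obtain \<psi> where \<psi>: "in_fragment r M (insert i F) SV \<psi>" "sat A (a(i := c)) S \<psi>"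
      "\<forall>d\<in>univ B. \<not> sat B (b(i := d)) T \<psi>"
    using separating_formula[OF assms(1), of r M "insert i F" SV A "a(i := c)" S B
        "\<lambda>d. b(i := d)" "\<lambda>_. T"] by auto
  have "in_fragment (Suc r) M F SV (ExFO i \<psi>)"
    using \<psi>(1) by (auto simp: in_fragment_def)
  moreover have "sat A a S (ExFO i \<psi>)" "\<not> sat B b T (ExFO i \<psi>)"
    using \<psi>(2,3) assms(3) by auto
  ultimately show False using frag_equivD[OF assms(2)] by blast
qed

lemma frag_equiv_forth_SO:
  assumes "finite (univ B)" "frag_equiv (Suc r) M F SV A a S B b T" "Y \<subseteq> univ A"
  shows "\<exists>Z\<subseteq>univ B. frag_equiv r M F (insert j SV) A a (S(j := Y)) B b (T(j := Z))"
proof (rule ccontr)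
  assume "\<not> ?thesis"
  then obtain \<psi> where \<psi>: "in_fragment r M F (insert j SV) \<psi>" "sat A a (S(j := Y)) \<psi>"
      "\<forall>Z\<in>Pow (univ B). \<not> sat B b (T(j := Z)) \<psi>"
    using separating_formula[of "Pow (univ B)" r M F "insert j SV" A a "S(j := Y)" B
        "\<lambda>_. b" "\<lambda>Z. T(j := Z)"] assms(1) by auto
  have "in_fragment (Suc r) M F SV (ExSO j \<psi>)"
    using \<psi>(1) by (auto simp: in_fragment_def)
  moreover have "sat A a S (ExSO j \<psi>)" "\<not> sat B b T (ExSO j \<psi>)"
    using \<psi>(2,3) assms(3) by auto
  ultimately show False using frag_equivD[OF assms(2)] by blast
qed

section \<open>Composition of models along a hypergraph\<close>

definition emb :: "'w \<Rightarrow> 'v \<times> nat \<Rightarrow> ('w \<times> 'v) \<times> nat" where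
  "emb v c = ((v, fst c), snd c)"

definition loc :: "('w \<times> 'v) \<times> nat \<Rightarrow> 'w" where
  "loc a = fst (fst a)"

definition prj :: "('w \<times> 'v) \<times> nat \<Rightarrow> 'v \<times> nat" where
  "prj a = (snd (fst a), snd a)"

lemma loc_emb [simp]: "loc (emb v c) = v"
  and prj_emb [simp]: "prj (emb v c) = c"
  and emb_loc_prj [simp]: "emb (loc a) (prj a) = a"
  and emb_Pair [simp]: "emb v (w, i) = ((v, w), i)"
  and loc_Pair [simp]: "loc ((v, w), i) = v"
  and prj_Pair [simp]: "prj ((v, w), i) = (w, i)"
  by (simp_all add: emb_def loc_def prj_def)

lemma emb_eq_iff [simp]: "emb v c = emb v' c' \<longleftrightarrow> v = v' \<and> c = c'"
  by (metis loc_emb prj_emb)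

lemma inj_emb: "inj (emb v)"
  by (metis injI prj_emb)

lemma eq_iff_loc_prj: "a = b \<longleftrightarrow> loc a = loc b \<and> prj a = prj b"
  by (metis emb_loc_prj)

text \<open>The operation f of the theorem.  The ports of a component are read off its unary
  predicates Inr p, so that the flattening can be computed from the component models alone.\<close>

definition compose :: "('x \<Rightarrow> nat) \<Rightarrow> ('w, 'x) hg \<Rightarrow> ('x \<Rightarrow> ('v \<times> nat, 'a + nat) model)
    \<Rightarrow> (('w \<times> 'v) \<times> nat, 'a + nat) model" where
  "compose arX G m =
    (let comp = (\<lambda>a. m (hlab G (loc a)));
         inside = (\<lambda>a. loc a \<in> hverts G \<and> prj a \<in> univ (comp a));
         port = (\<lambda>a p. 1 \<le> p \<and> p \<le> arX (hlab G (loc a)) \<and> prj a \<in> upred (comp a) (Inr p))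
     in \<lparr> univ = {a. inside a},
          brel = {(a, b). inside a \<and> inside b \<and>
                   ((loc a = loc b \<and> (prj a, prj b) \<in> brel (comp a)) \<or>
                    (\<exists>p p'. port a p \<and> port b p' \<and> ((loc a, p), (loc b, p')) \<in> hedge G))},
          upred = (\<lambda>q. {a. inside a \<and>
                   (case q of
                      Inl s \<Rightarrow> prj a \<in> upred (comp a) (Inl s)
                    | Inr k \<Rightarrow> 1 \<le> k \<and> k \<le> harity G \<and> (\<exists>p. port a p \<and> hport G (loc a, p) = k))}) \<rparr>)"

lemma compose_univ:
  "a \<in> univ (compose arX G m) \<longleftrightarrow> loc a \<in> hverts G \<and> prj a \<in> univ (m (hlab G (loc a)))"
  by (simp add: compose_def)

lemma compose_brel:
  "(a, b) \<in> brel (compose arX G m) \<longleftrightarrow>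
     a \<in> univ (compose arX G m) \<and> b \<in> univ (compose arX G m) \<and>
     ((loc a = loc b \<and> (prj a, prj b) \<in> brel (m (hlab G (loc a)))) \<or>
      (\<exists>p p'. 1 \<le> p \<and> p \<le> arX (hlab G (loc a)) \<and> prj a \<in> upred (m (hlab G (loc a))) (Inr p) \<and>
              1 \<le> p' \<and> p' \<le> arX (hlab G (loc b)) \<and> prj b \<in> upred (m (hlab G (loc b))) (Inr p') \<and>
              ((loc a, p), (loc b, p')) \<in> hedge G))"
  by (auto simp: compose_def)

lemma compose_upred_Inl:
  "a \<in> upred (compose arX G m) (Inl s) \<longleftrightarrow>
     a \<in> univ (compose arX G m) \<and> prj a \<in> upred (m (hlab G (loc a))) (Inl s)"
  by (simp add: compose_def)

lemma compose_upred_Inr: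
  "a \<in> upred (compose arX G m) (Inr k) \<longleftrightarrow>
     a \<in> univ (compose arX G m) \<and> 1 \<le> k \<and> k \<le> harity G \<and>
     (\<exists>p. 1 \<le> p \<and> p \<le> arX (hlab G (loc a)) \<and> prj a \<in> upred (m (hlab G (loc a))) (Inr p) \<and>
          hport G (loc a, p) = k)"
  by (auto simp: compose_def)

lemma finite_compose_univ:
  assumes "finite (hverts G)" "\<And>v. v \<in> hverts G \<Longrightarrow> finite (univ (m (hlab G v)))"
  shows "finite (univ (compose arX G m))"
proof (rule finite_subset)
  show "univ (compose arX G m) \<subseteq> (\<Union>v\<in>hverts G. emb v ` univ (m (hlab G v)))"
  proof
    fix a assume "a \<in> univ (compose arX G m)"
    then show "a \<in> (\<Union>v\<in>hverts G. emb v ` univ (m (hlab G v)))"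
      unfolding compose_univ by (intro UN_I[of "loc a"] image_eqI[of a "emb (loc a)" "prj a"]) simp_all
  qed
  show "finite (\<Union>v\<in>hverts G. emb v ` univ (m (hlab G v)))"
    using assms by blast
qed

abbreviation qf_false :: "'p qf" where
  "qf_false \<equiv> QNot QEq"

fun qf_disj :: "'p qf list \<Rightarrow> 'p qf" where
  "qf_disj [] = qf_false"
| "qf_disj (\<psi> # \<psi>s) = QNot (QAnd (QNot \<psi>) (QNot (qf_disj \<psi>s)))"

lemma qf_sat_disj [simp]: "qf_sat A (qf_disj \<psi>s) c \<longleftrightarrow> (\<exists>\<psi>\<in>set \<psi>s. qf_sat A \<psi> c)"
  by (induction \<psi>s) auto

definition qf_ex_upto :: "nat \<Rightarrow> (nat \<Rightarrow> 'p qf) \<Rightarrow> 'p qf" where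
  "qf_ex_upto n \<psi> = qf_disj (map \<psi> [1..<Suc n])"

lemma qf_sat_ex_upto [simp]:
  "qf_sat A (qf_ex_upto n \<psi>) c \<longleftrightarrow> (\<exists>p. 1 \<le> p \<and> p \<le> n \<and> qf_sat A (\<psi> p) c)"
  by (auto simp: qf_ex_upto_def)

text \<open>A quantifier-free property of a corner of the composition, expressed inside its
  component: a self-loop may also come from an edge of G between two ports of one hypervertex.\<close>

fun qf_local :: "('x \<Rightarrow> nat) \<Rightarrow> ('w, 'x) hg \<Rightarrow> 'w \<Rightarrow> ('a + nat) qf \<Rightarrow> ('a + nat) qf" where
  "qf_local arX G v QEq = QEq"
| "qf_local arX G v QEdge =
     qf_disj [QEdge, qf_ex_upto (arX (hlab G v)) (\<lambda>p. qf_ex_upto (arX (hlab G v)) (\<lambda>p'.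
       if ((v, p), (v, p')) \<in> hedge G then QAnd (QPred (Inr p)) (QPred (Inr p')) else qf_false))]"
| "qf_local arX G v (QPred (Inl s)) = QPred (Inl s)"
| "qf_local arX G v (QPred (Inr k)) =
     (if 1 \<le> k \<and> k \<le> harity G
      then qf_ex_upto (arX (hlab G v)) (\<lambda>p. if hport G (v, p) = k then QPred (Inr p) else qf_false)
      else qf_false)"
| "qf_local arX G v (QNot \<psi>) = QNot (qf_local arX G v \<psi>)"
| "qf_local arX G v (QAnd \<psi> \<chi>) = QAnd (qf_local arX G v \<psi>) (qf_local arX G v \<chi>)"

lemma qf_sat_compose:
  assumes "a \<in> univ (compose arX G m)"
  shows "qf_sat (compose arX G m) \<psi> a = qf_sat (m (hlab G (loc a))) (qf_local arX G (loc a) \<psi>) (prj a)"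
  using assms
  by (induction arX G "loc a" \<psi> rule: qf_local.induct)
     (auto simp: compose_brel compose_upred_Inl compose_upred_Inr)

fun sterm_local :: "('x \<Rightarrow> nat) \<Rightarrow> ('w, 'x) hg \<Rightarrow> 'w \<Rightarrow> ('a + nat) sterm \<Rightarrow> ('a + nat) sterm" where
  "sterm_local arX G v (SVar j) = SVar j"
| "sterm_local arX G v (SConst \<psi>) = SConst (qf_local arX G v \<psi>)"

lemma svars_sterm_local [simp]: "svars_t (sterm_local arX G v U) = svars_t U"
  by (cases U) auto

definition fibers :: "'w \<Rightarrow> (nat \<Rightarrow> (('w \<times> 'v) \<times> nat) set) \<Rightarrow> nat \<Rightarrow> ('v \<times> nat) set" where
  "fibers v S j = emb v -` S j"

lemma fibers_fun_upd [simp]: "fibers v (S(j := Y)) = (fibers v S)(j := emb v -` Y)"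
  by (rule ext) (simp add: fibers_def)

lemma sval_compose:
  assumes "\<forall>j\<in>svars_t U. S j \<subseteq> univ (compose arX G m)"
  shows "c \<in> sval (compose arX G m) S U \<longleftrightarrow> c \<in> univ (compose arX G m) \<and>
           prj c \<in> sval (m (hlab G (loc c))) (fibers (loc c) S) (sterm_local arX G (loc c) U)"
  using assms qf_sat_compose[of c arX G m]
  by (cases U) (auto simp: fibers_def compose_univ)

lemma sval_compose_subset:
  assumes "\<forall>j\<in>svars_t U. S j \<subseteq> univ (compose arX G m)"
  shows "sval (compose arX G m) S U \<subseteq> univ (compose arX G m)"
  using assms by (cases U) auto

lemma sval_compose_fiber:
  assumes "\<forall>j\<in>svars_t U. S j \<subseteq> univ (compose arX G m)" "v \<in> hverts G"
  shows "emb v -` sval (compose arX G m) S U = sval (m (hlab G v)) (fibers v S) (sterm_local arX G v U)"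
  using assms qf_sat_compose[of "emb v _" arX G m]
  by (cases U) (auto simp: fibers_def compose_univ)

lemma subset_iff_fibers:
  assumes "S \<subseteq> {a. loc a \<in> V}"
  shows "S \<subseteq> S' \<longleftrightarrow> (\<forall>v\<in>V. emb v -` S \<subseteq> emb v -` S')"
  using assms by (auto, metis emb_loc_prj mem_Collect_eq subset_iff vimageE vimageI)

lemma singleton_iff_fibers:
  assumes "S \<subseteq> {a. loc a \<in> V}"
  shows "(\<exists>a. S = {a}) \<longleftrightarrow>
           (\<exists>v\<in>V. (\<exists>c. emb v -` S = {c}) \<and> (\<forall>v'\<in>V. v' \<noteq> v \<longrightarrow> emb v' -` S = {}))"
proof
  assume "\<exists>a. S = {a}"
  then obtain a where "S = {a}" by blast
  then have "loc a \<in> V" "emb (loc a) -` S = {prj a}" "\<forall>v'. v' \<noteq> loc a \<longrightarrow> emb v' -` S = {}"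
    using assms by (auto simp: eq_iff_loc_prj[of _ a])
  then show "\<exists>v\<in>V. (\<exists>c. emb v -` S = {c}) \<and> (\<forall>v'\<in>V. v' \<noteq> v \<longrightarrow> emb v' -` S = {})"
    by blast
next
  assume "\<exists>v\<in>V. (\<exists>c. emb v -` S = {c}) \<and> (\<forall>v'\<in>V. v' \<noteq> v \<longrightarrow> emb v' -` S = {})"
  then obtain v c where v: "emb v -` S = {c}" "\<forall>v'\<in>V. v' \<noteq> v \<longrightarrow> emb v' -` S = {}"
    by blast
  have "a \<in> S \<longleftrightarrow> a = emb v c" for a
  proof
    assume "a \<in> S"
    then have "prj a \<in> emb (loc a) -` S" "loc a \<in> V"
      using assms by auto
    then show "a = emb v c"
      using v by (cases "loc a = v") (auto simp: eq_iff_loc_prj[of a])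
  qed (use v in auto)
  then show "\<exists>a. S = {a}" by blast
qed

lemma card_eq_sum_fibers:
  assumes "finite V" "finite S" "S \<subseteq> {a. loc a \<in> V}"
  shows "card S = (\<Sum>v\<in>V. card (emb v -` S))"
proof -
  have "S = (\<Union>v\<in>V. emb v ` (emb v -` S))"
  proof
    show "S \<subseteq> (\<Union>v\<in>V. emb v ` (emb v -` S))"
    proof
      fix a assume "a \<in> S"
      then show "a \<in> (\<Union>v\<in>V. emb v ` (emb v -` S))"
        using assms(3) by (intro UN_I[of "loc a"] image_eqI[of a "emb (loc a)" "prj a"]) auto
    qed
  qed auto
  also have "card \<dots> = (\<Sum>v\<in>V. card (emb v ` (emb v -` S)))"
    using assms(1,2) by (intro card_UN_disjoint) (auto intro: finite_vimageI inj_emb)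
  also have "\<dots> = (\<Sum>v\<in>V. card (emb v -` S))"
    by (intro sum.cong refl card_image inj_on_subset[OF inj_emb]) simp
  finally show ?thesis .
qed

section \<open>Composition preserves equivalence\<close>

text \<open>The invariant of the back-and-forth argument: corresponding first-order variables lie in
  the same component, and in every component the two assignments agree on all formulas whose
  free first-order variables point into that component.\<close>

definition comp_equiv :: "('x \<Rightarrow> nat) \<Rightarrow> ('w, 'x) hg \<Rightarrow> nat \<Rightarrow> nat set \<Rightarrow> nat set \<Rightarrow> nat set
    \<Rightarrow> ('x \<Rightarrow> ('v \<times> nat, 'a + nat) model) \<Rightarrow> (nat \<Rightarrow> ('w \<times> 'v) \<times> nat)
    \<Rightarrow> (nat \<Rightarrow> (('w \<times> 'v) \<times> nat) set)
    \<Rightarrow> ('x \<Rightarrow> ('v \<times> nat, 'a + nat) model) \<Rightarrow> (nat \<Rightarrow> ('w \<times> 'v) \<times> nat)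
    \<Rightarrow> (nat \<Rightarrow> (('w \<times> 'v) \<times> nat) set) \<Rightarrow> bool" where
  "comp_equiv arX G r M F SV m a S m' b T \<longleftrightarrow>
     finite (hverts G) \<and>
     (\<forall>v\<in>hverts G. finite (univ (m (hlab G v))) \<and> finite (univ (m' (hlab G v)))) \<and>
     (\<forall>i\<in>F. a i \<in> univ (compose arX G m) \<and> b i \<in> univ (compose arX G m') \<and> loc (b i) = loc (a i)) \<and>
     (\<forall>j\<in>SV. S j \<subseteq> univ (compose arX G m) \<and> T j \<subseteq> univ (compose arX G m')) \<and>
     (\<forall>v\<in>hverts G. frag_equiv r M {i\<in>F. loc (a i) = v} SV
        (m (hlab G v)) (prj \<circ> a) (fibers v S) (m' (hlab G v)) (prj \<circ> b) (fibers v T))"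

lemma comp_equiv_sym:
  assumes "comp_equiv arX G r M F SV m a S m' b T"
  shows "comp_equiv arX G r M F SV m' b T m a S"
proof -
  have "{i\<in>F. loc (b i) = v} = {i\<in>F. loc (a i) = v}" for v
    using assms unfolding comp_equiv_def by auto
  then show ?thesis
    using assms unfolding comp_equiv_def by (auto intro: frag_equiv_sym)
qed

context
  fixes arX G r M F SV m a S m' b T
  assumes equiv: "comp_equiv arX G r M F SV m a S m' b T"
begin

lemma comp_equiv_finite:
  "finite (hverts G)" "finite (univ (compose arX G m))" "finite (univ (compose arX G m'))"
  using equiv by (auto simp: comp_equiv_def intro!: finite_compose_univ)

lemma comp_equiv_var:
  assumes "i \<in> F"
  shows "a i \<in> univ (compose arX G m)" "b i \<in> univ (compose arX G m')"
    "loc (b i) = loc (a i)" "loc (a i) \<in> hverts G"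
  using equiv assms by (auto simp: comp_equiv_def compose_univ)

lemma comp_equiv_set_var:
  assumes "svars_t U \<subseteq> SV"
  shows "\<forall>j\<in>svars_t U. S j \<subseteq> univ (compose arX G m)" "\<forall>j\<in>svars_t U. T j \<subseteq> univ (compose arX G m')"
  using equiv assms by (auto simp: comp_equiv_def)

lemma comp_equiv_component:
  assumes "v \<in> hverts G" "in_fragment r M {i\<in>F. loc (a i) = v} SV \<psi>"
  shows "sat (m (hlab G v)) (prj \<circ> a) (fibers v S) \<psi> = sat (m' (hlab G v)) (prj \<circ> b) (fibers v T) \<psi>"
  using equiv assms frag_equivD unfolding comp_equiv_def by blast

lemma comp_equiv_upred:
  assumes "i \<in> F"
  shows "prj (a i) \<in> upred (m (hlab G (loc (a i)))) q \<longleftrightarrow> prj (b i) \<in> upred (m' (hlab G (loc (a i)))) q"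
  using comp_equiv_component[of "loc (a i)" "Pred q i"] comp_equiv_var[OF assms] assms
  by (simp add: in_fragment_def)

lemma comp_equiv_sat_Eq:
  assumes "i \<in> F" "j \<in> F"
  shows "sat (compose arX G m) a S (Eq i j) = sat (compose arX G m') b T (Eq i j)"
proof -
  have "prj (a i) = prj (a j) \<longleftrightarrow> prj (b i) = prj (b j)" if "loc (a i) = loc (a j)"
    using comp_equiv_component[of "loc (a i)" "Eq i j"] comp_equiv_var[OF assms(1)] assms that
    by (simp add: in_fragment_def)
  then show ?thesis
    using comp_equiv_var(3)[OF assms(1)] comp_equiv_var(3)[OF assms(2)]
    by (auto simp: eq_iff_loc_prj[of "a i"] eq_iff_loc_prj[of "b i"])
qed

lemma comp_equiv_sat_Edge:
  assumes "i \<in> F" "j \<in> F"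
  shows "sat (compose arX G m) a S (Edge i j) = sat (compose arX G m') b T (Edge i j)"
proof -
  have "(prj (a i), prj (a j)) \<in> brel (m (hlab G (loc (a i)))) \<longleftrightarrow>
        (prj (b i), prj (b j)) \<in> brel (m' (hlab G (loc (a i))))" if "loc (a i) = loc (a j)"
    using comp_equiv_component[of "loc (a i)" "Edge i j"] comp_equiv_var[OF assms(1)] assms that
    by (simp add: in_fragment_def)
  then show ?thesis
    using comp_equiv_var[OF assms(1)] comp_equiv_var[OF assms(2)]
      comp_equiv_upred[OF assms(1)] comp_equiv_upred[OF assms(2)]
    by (auto simp: compose_brel)
qed

lemma comp_equiv_sat_Pred:
  assumes "i \<in> F"
  shows "sat (compose arX G m) a S (Pred q i) = sat (compose arX G m') b T (Pred q i)"
  using comp_equiv_var[OF assms] comp_equiv_upred[OF assms]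
  by (cases q) (simp_all add: compose_upred_Inl compose_upred_Inr)

lemma comp_equiv_sat_Mem:
  assumes "i \<in> F" "svars_t U \<subseteq> SV"
  shows "sat (compose arX G m) a S (Mem i U) = sat (compose arX G m') b T (Mem i U)"
proof -
  have "prj (a i) \<in> sval (m (hlab G (loc (a i)))) (fibers (loc (a i)) S) (sterm_local arX G (loc (a i)) U)
    \<longleftrightarrow> prj (b i) \<in> sval (m' (hlab G (loc (a i)))) (fibers (loc (a i)) T) (sterm_local arX G (loc (a i)) U)"
    using comp_equiv_component[of "loc (a i)" "Mem i (sterm_local arX G (loc (a i)) U)"]
      comp_equiv_var[OF assms(1)] assms
    by (simp add: in_fragment_def)
  then show ?thesis
    using comp_equiv_var[OF assms(1)] comp_equiv_set_var[OF assms(2)]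
    by (simp add: sval_compose)
qed

lemma comp_equiv_sval_fiber:
  assumes "svars_t U \<subseteq> SV" "v \<in> hverts G"
  shows "emb v -` sval (compose arX G m) S U = sval (m (hlab G v)) (fibers v S) (sterm_local arX G v U)"
    "emb v -` sval (compose arX G m') T U = sval (m' (hlab G v)) (fibers v T) (sterm_local arX G v U)"
  using comp_equiv_set_var[OF assms(1)] assms(2) by (simp_all add: sval_compose_fiber)

lemma comp_equiv_sval_subset:
  assumes "svars_t U \<subseteq> SV"
  shows "sval (compose arX G m) S U \<subseteq> {c. loc c \<in> hverts G}"
    "sval (compose arX G m') T U \<subseteq> {c. loc c \<in> hverts G}"
  using sval_compose_subset[OF comp_equiv_set_var(1)[OF assms]]
    sval_compose_subset[OF comp_equiv_set_var(2)[OF assms]]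
  by (auto simp: compose_univ)

lemma comp_equiv_sat_Subset:
  assumes "svars_t U \<subseteq> SV" "svars_t U' \<subseteq> SV"
  shows "sat (compose arX G m) a S (Subset U U') = sat (compose arX G m') b T (Subset U U')"
proof -
  have "sval (m (hlab G v)) (fibers v S) (sterm_local arX G v U) \<subseteq>
          sval (m (hlab G v)) (fibers v S) (sterm_local arX G v U') \<longleftrightarrow>
        sval (m' (hlab G v)) (fibers v T) (sterm_local arX G v U) \<subseteq>
          sval (m' (hlab G v)) (fibers v T) (sterm_local arX G v U')" if "v \<in> hverts G" for v
    using comp_equiv_component[OF that, of "Subset (sterm_local arX G v U) (sterm_local arX G v U')"] assms
    by (simp add: in_fragment_def)
  then show ?thesis
    using comp_equiv_sval_fiber[OF assms(1)] comp_equiv_sval_fiber[OF assms(2)]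
    by (simp add: subset_iff_fibers[OF comp_equiv_sval_subset(1)[OF assms(1)]]
        subset_iff_fibers[OF comp_equiv_sval_subset(2)[OF assms(1)]])
qed

lemma comp_equiv_sat_Single:
  assumes "svars_t U \<subseteq> SV"
  shows "sat (compose arX G m) a S (Single U) = sat (compose arX G m') b T (Single U)"
proof -
  have "(\<exists>c. sval (m (hlab G v)) (fibers v S) (sterm_local arX G v U) = {c}) \<longleftrightarrow>
        (\<exists>c. sval (m' (hlab G v)) (fibers v T) (sterm_local arX G v U) = {c})" if "v \<in> hverts G" for v
    using comp_equiv_component[OF that, of "Single (sterm_local arX G v U)"] assms
    by (simp add: in_fragment_def)
  moreover have "sval (m (hlab G v)) (fibers v S) (sterm_local arX G v U) = {} \<longleftrightarrow>
        sval (m' (hlab G v)) (fibers v T) (sterm_local arX G v U) = {}" if "v \<in> hverts G" for v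
    \<comment> \<open>emptiness, as inclusion in the empty set constant\<close>
    using comp_equiv_component[OF that, of "Subset (sterm_local arX G v U) (SConst qf_false)"] assms
    by (simp add: in_fragment_def)
  ultimately show ?thesis
    unfolding sat.simps singleton_iff_fibers[OF comp_equiv_sval_subset(1)[OF assms(1)]]
      singleton_iff_fibers[OF comp_equiv_sval_subset(2)[OF assms(1)]]
    using comp_equiv_sval_fiber[OF assms(1)] by (intro bex_cong refl) auto
qed

lemma comp_equiv_sat_CardMod:
  assumes "svars_t U \<subseteq> SV" "n \<in> M"
  shows "sat (compose arX G m) a S (CardMod U k n) = sat (compose arX G m') b T (CardMod U k n)"
proof -
  define X where "X = sval (compose arX G m) S U"
  define Y where "Y = sval (compose arX G m') T U"
  have fin: "finite X" "finite Y"
    using comp_equiv_finite sval_compose_subset comp_equiv_set_var[OF assms(1)]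
    unfolding X_def Y_def by (meson finite_subset)+
  have fibers_mod: "card (emb v -` X) mod n = card (emb v -` Y) mod n" if v: "v \<in> hverts G" for v
  proof -
    have "finite (emb v -` X)"
      using fin(1) inj_emb by (rule finite_vimageI)
    then show ?thesis
      using comp_equiv_component[OF v, of "CardMod (sterm_local arX G v U) (card (emb v -` X)) n"]
        comp_equiv_sval_fiber[OF assms(1) v] assms
      by (simp add: in_fragment_def X_def Y_def)
  qed
  note card_X = card_eq_sum_fibers[OF comp_equiv_finite(1) fin(1)
      comp_equiv_sval_subset(1)[OF assms(1), folded X_def]]
  note card_Y = card_eq_sum_fibers[OF comp_equiv_finite(1) fin(2)
      comp_equiv_sval_subset(2)[OF assms(1), folded Y_def]]
  have "card X mod n = (\<Sum>v\<in>hverts G. card (emb v -` X) mod n) mod n"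
    unfolding card_X by (simp add: mod_sum_eq)
  also have "\<dots> = (\<Sum>v\<in>hverts G. card (emb v -` Y) mod n) mod n"
    using fibers_mod by (simp cong: sum.cong)
  also have "\<dots> = card Y mod n"
    unfolding card_Y by (simp add: mod_sum_eq)
  finally have "card X mod n = card Y mod n" .
  with fin show ?thesis
    by (simp add: X_def Y_def)
qed

end

lemma comp_equiv_forth_FO:
  assumes equiv: "comp_equiv arX G (Suc r) M F SV m a S m' b T"
    and c: "c \<in> univ (compose arX G m)"
  shows "\<exists>d\<in>univ (compose arX G m').
           comp_equiv arX G r M (insert i F) SV m (a(i := c)) S m' (b(i := d)) T"
proof -
  define v where "v = loc c"
  have v: "v \<in> hverts G" "prj c \<in> univ (m (hlab G v))"
    using c by (simp_all add: compose_univ v_def)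
  have equiv_v: "frag_equiv (Suc r) M {i'\<in>F. loc (a i') = v} SV
      (m (hlab G v)) (prj \<circ> a) (fibers v S) (m' (hlab G v)) (prj \<circ> b) (fibers v T)"
    using equiv v(1) by (simp add: comp_equiv_def)
  obtain e where e: "e \<in> univ (m' (hlab G v))"
    "frag_equiv r M (insert i {i'\<in>F. loc (a i') = v}) SV (m (hlab G v)) ((prj \<circ> a)(i := prj c))
       (fibers v S) (m' (hlab G v)) ((prj \<circ> b)(i := e)) (fibers v T)"
    using frag_equiv_forth_FO[OF _ equiv_v v(2), of i] equiv v(1) by (auto simp: comp_equiv_def)
  have "frag_equiv r M {i' \<in> insert i F. loc ((a(i := c)) i') = u} SV
      (m (hlab G u)) (prj \<circ> a(i := c)) (fibers u S) (m' (hlab G u)) (prj \<circ> b(i := emb v e)) (fibers u T)"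
    if u: "u \<in> hverts G" for u
  proof (cases "u = v")
    case True
    then have "{i' \<in> insert i F. loc ((a(i := c)) i') = u} = insert i {i'\<in>F. loc (a i') = v}"
      by (auto simp: v_def)
    then show ?thesis using e(2) True by (simp add: fun_upd_comp)
  next
    case False
    then have "{i' \<in> insert i F. loc ((a(i := c)) i') = u} = {i'\<in>F. loc (a i') = u} - {i}"
      by (auto simp: v_def)
    moreover have "frag_equiv r M ({i'\<in>F. loc (a i') = u} - {i}) SV
        (m (hlab G u)) (prj \<circ> a) (fibers u S) (m' (hlab G u)) (prj \<circ> b) (fibers u T)"
      using equiv u by (auto simp: comp_equiv_def intro: frag_equiv_mono)
    ultimately show ?thesis
      by (simp add: fun_upd_comp frag_equiv_fun_upd)
  qed
  moreover have "emb v e \<in> univ (compose arX G m')"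
    using v(1) e(1) by (simp add: compose_univ)
  ultimately show ?thesis
    using equiv c by (intro bexI[of _ "emb v e"]) (auto simp: comp_equiv_def v_def)
qed

lemma comp_equiv_forth_SO:
  assumes equiv: "comp_equiv arX G (Suc r) M F SV m a S m' b T"
    and Y: "Y \<subseteq> univ (compose arX G m)"
  shows "\<exists>Z\<subseteq>univ (compose arX G m').
           comp_equiv arX G r M F (insert j SV) m a (S(j := Y)) m' b (T(j := Z))"
proof -
  have "\<forall>v\<in>hverts G. \<exists>Z\<subseteq>univ (m' (hlab G v)). frag_equiv r M {i\<in>F. loc (a i) = v} (insert j SV)
      (m (hlab G v)) (prj \<circ> a) ((fibers v S)(j := emb v -` Y))
      (m' (hlab G v)) (prj \<circ> b) ((fibers v T)(j := Z))"
  proof (intro ballI frag_equiv_forth_SO)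
    fix v assume v: "v \<in> hverts G"
    show "finite (univ (m' (hlab G v)))"
      "frag_equiv (Suc r) M {i\<in>F. loc (a i) = v} SV
         (m (hlab G v)) (prj \<circ> a) (fibers v S) (m' (hlab G v)) (prj \<circ> b) (fibers v T)"
      using equiv v by (simp_all add: comp_equiv_def)
    show "emb v -` Y \<subseteq> univ (m (hlab G v))"
      using Y by (auto simp: compose_univ)
  qed
  then obtain Z where Z: "\<forall>v\<in>hverts G. Z v \<subseteq> univ (m' (hlab G v)) \<and>
      frag_equiv r M {i\<in>F. loc (a i) = v} (insert j SV)
        (m (hlab G v)) (prj \<circ> a) ((fibers v S)(j := emb v -` Y))
        (m' (hlab G v)) (prj \<circ> b) ((fibers v T)(j := Z v))"
    by (rule bchoice[THEN exE])
  define Z' where "Z' = {d. loc d \<in> hverts G \<and> prj d \<in> Z (loc d)}"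
  have "Z' \<subseteq> univ (compose arX G m')"
  proof
    fix d assume "d \<in> Z'"
    then have "loc d \<in> hverts G" "prj d \<in> Z (loc d)"
      by (simp_all add: Z'_def)
    then show "d \<in> univ (compose arX G m')"
      unfolding compose_univ using Z by blast
  qed
  moreover have "comp_equiv arX G r M F (insert j SV) m a (S(j := Y)) m' b (T(j := Z'))"
    unfolding comp_equiv_def
  proof (intro conjI ballI)
    fix v assume v: "v \<in> hverts G"
    then have "fibers v (T(j := Z')) = (fibers v T)(j := Z v)"
      by (auto simp: Z'_def)
    with v Z show "frag_equiv r M {i\<in>F. loc (a i) = v} (insert j SV) (m (hlab G v)) (prj \<circ> a)
        (fibers v (S(j := Y))) (m' (hlab G v)) (prj \<circ> b) (fibers v (T(j := Z')))"
      by simp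
  qed (use equiv Y calculation in \<open>auto simp: comp_equiv_def\<close>)
  ultimately show ?thesis
    by blast
qed

lemma comp_equiv_sat_ExFO:
  fixes m m' :: "'x \<Rightarrow> ('v \<times> nat, 'a + nat) model"
  assumes equiv: "comp_equiv arX G (Suc r) M F SV m a S m' b T"
    and IH: "\<And>a' b'. comp_equiv arX G r M (insert i F) SV m a' S m' b' T \<Longrightarrow>
      sat (compose arX G m) a' S \<phi> = sat (compose arX G m') b' T \<phi>"
    and "sat (compose arX G m) a S (ExFO i \<phi>)"
  shows "sat (compose arX G m') b T (ExFO i \<phi>)"
proof -
  obtain c where c: "c \<in> univ (compose arX G m)" "sat (compose arX G m) (a(i := c)) S \<phi>"
    using assms(3) unfolding sat.simps by blast
  obtain d where d: "d \<in> univ (compose arX G m')"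
    and equiv': "comp_equiv arX G r M (insert i F) SV m (a(i := c)) S m' (b(i := d)) T"
    using comp_equiv_forth_FO[OF equiv c(1)] by blast
  have "sat (compose arX G m') (b(i := d)) T \<phi>"
    by (rule iffD1[OF IH[OF equiv'] c(2)])
  with d show ?thesis
    by (simp only: sat.simps) blast
qed

lemma comp_equiv_sat_ExSO:
  fixes m m' :: "'x \<Rightarrow> ('v \<times> nat, 'a + nat) model"
  assumes equiv: "comp_equiv arX G (Suc r) M F SV m a S m' b T"
    and IH: "\<And>S' T'. comp_equiv arX G r M F (insert j SV) m a S' m' b T' \<Longrightarrow>
      sat (compose arX G m) a S' \<phi> = sat (compose arX G m') b T' \<phi>"
    and "sat (compose arX G m) a S (ExSO j \<phi>)"
  shows "sat (compose arX G m') b T (ExSO j \<phi>)"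
proof -
  obtain Y where Y: "Y \<subseteq> univ (compose arX G m)" "sat (compose arX G m) a (S(j := Y)) \<phi>"
    using assms(3) unfolding sat.simps by blast
  obtain Z where Z: "Z \<subseteq> univ (compose arX G m')"
    and equiv': "comp_equiv arX G r M F (insert j SV) m a (S(j := Y)) m' b (T(j := Z))"
    using comp_equiv_forth_SO[OF equiv Y(1)] by blast
  have "sat (compose arX G m') b (T(j := Z)) \<phi>"
    by (rule iffD1[OF IH[OF equiv'] Y(2)])
  with Z show ?thesis
    by (simp only: sat.simps) blast
qed

lemma compose_sat_eq:
  fixes m m' :: "'x \<Rightarrow> ('v \<times> nat, 'a + nat) model" and G :: "('w, 'x) hg"
  shows "comp_equiv arX G r M F SV m a S m' b T \<Longrightarrow> in_fragment r M F SV \<phi> \<Longrightarrow>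
    sat (compose arX G m) a S \<phi> = sat (compose arX G m') b T \<phi>"
proof (induction \<phi> arbitrary: r F SV m a S m' b T)
  case (Eq i j)
  then show ?case by (intro comp_equiv_sat_Eq) (auto simp: in_fragment_def)
next
  case (Edge i j)
  then show ?case by (intro comp_equiv_sat_Edge) (auto simp: in_fragment_def)
next
  case (Pred q i)
  then show ?case by (intro comp_equiv_sat_Pred) (auto simp: in_fragment_def)
next
  case (Mem i U)
  then show ?case by (intro comp_equiv_sat_Mem) (auto simp: in_fragment_def)
next
  case (CardMod U k n)
  then show ?case by (intro comp_equiv_sat_CardMod) (auto simp: in_fragment_def)
next
  case (Subset U U')
  then show ?case by (intro comp_equiv_sat_Subset) (auto simp: in_fragment_def)
next
  case (Single U)
  then show ?case by (intro comp_equiv_sat_Single) (auto simp: in_fragment_def)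
next
  case (Neg \<phi>)
  then show ?case by (simp add: in_fragment_def)
next
  case (Conj \<phi> \<psi>)
  then show ?case by (simp add: in_fragment_def)
next
  case (ExFO i \<phi>)
  from ExFO.prems(2) obtain r' where r: "r = Suc r'" and \<phi>: "in_fragment r' M (insert i F) SV \<phi>"
    by (cases r) (auto simp: in_fragment_def)
  note equiv = ExFO.prems(1)[unfolded r]
  show ?case
    using comp_equiv_sat_ExFO[OF equiv ExFO.IH[OF _ \<phi>]]
      comp_equiv_sat_ExFO[OF comp_equiv_sym[OF equiv] ExFO.IH[OF _ \<phi>]] by blast
next
  case (ExSO j \<phi>)
  from ExSO.prems(2) obtain r' where r: "r = Suc r'" and \<phi>: "in_fragment r' M F (insert j SV) \<phi>"
    by (cases r) (auto simp: in_fragment_def)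
  note equiv = ExSO.prems(1)[unfolded r]
  show ?case
    using comp_equiv_sat_ExSO[OF equiv ExSO.IH[OF _ \<phi>]]
      comp_equiv_sat_ExSO[OF comp_equiv_sym[OF equiv] ExSO.IH[OF _ \<phi>]] by blast
qed

section \<open>Composition computes the flattening\<close>

lemma finite_corners: "finite (hverts K) \<Longrightarrow> finite (corners ar K)"
  by (rule finite_subset[of _ "SIGMA v:hverts K. {1..ar (hlab K v)}"]) (auto simp: corners_def)

lemma compose_to_model_flatten:
  assumes val: "valuation S arS X arX \<eta>" and G: "wf_hg X arX G"
  shows "compose arX G (\<lambda>x. to_model arS (\<eta> x)) = to_model arS (flatten arS G \<eta>)"
proof -
  have arity: "harity (\<eta> (hlab G v)) = arX (hlab G v)"
    and wf: "wf_hg S arS (\<eta> (hlab G v))" if "v \<in> hverts G" for v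
  proof -
    have "hlab G v \<in> X"
      using G that by (simp add: wf_hg_def)
    then show "harity (\<eta> (hlab G v)) = arX (hlab G v)" "wf_hg S arS (\<eta> (hlab G v))"
      using val by (simp_all add: valuation_def)
  qed
  have port: "1 \<le> hport (\<eta> (hlab G v)) c \<and> hport (\<eta> (hlab G v)) c \<le> arX (hlab G v)"
    if "v \<in> hverts G" "c \<in> corners arS (\<eta> (hlab G v))" for v c
    using wf[OF that(1)] that(2) unfolding wf_hg_def arity[OF that(1), symmetric] by blast
  show ?thesis
  proof (rule model.equality)
    show "univ (compose arX G (\<lambda>x. to_model arS (\<eta> x))) = univ (to_model arS (flatten arS G \<eta>))"
      by (auto simp: compose_univ to_model_def corners_def flatten_def Let_def)
    show "brel (compose arX G (\<lambda>x. to_model arS (\<eta> x))) = brel (to_model arS (flatten arS G \<eta>))"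
      using arity port by (auto simp: compose_brel compose_univ to_model_def corners_def flatten_def Let_def)
    show "upred (compose arX G (\<lambda>x. to_model arS (\<eta> x))) = upred (to_model arS (flatten arS G \<eta>))"
    proof
      fix q
      show "upred (compose arX G (\<lambda>x. to_model arS (\<eta> x))) q = upred (to_model arS (flatten arS G \<eta>)) q"
        using arity port
        by (cases q) (auto simp: compose_upred_Inl compose_upred_Inr compose_univ to_model_def
            corners_def flatten_def Let_def)
    qed
  qed simp
qed

lemma cmso_compatible_compose:
  fixes D :: "'x \<Rightarrow> ('v \<times> nat, 'a + nat) model set" and G :: "('w, 'x) hg"
  assumes "finite (hverts G)" "\<And>v. v \<in> hverts G \<Longrightarrow> hlab G v \<in> X"
    and "\<And>x A. x \<in> X \<Longrightarrow> A \<in> D x \<Longrightarrow> finite (univ A)"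
  shows "cmso_compatible X D (compose arX G)"
  unfolding cmso_compatible_def
proof (intro allI impI)
  fix r M and m m' :: "'x \<Rightarrow> ('v \<times> nat, 'a + nat) model"
  assume equiv: "\<forall>x\<in>X. m x \<in> D x \<and> m' x \<in> D x \<and> rM_equiv r M (m x) (m' x)"
  have "finite (univ (m (hlab G v)))" "finite (univ (m' (hlab G v)))"
    and "frag_equiv r M {} {} (m (hlab G v)) a S (m' (hlab G v)) b T" if "v \<in> hverts G" for v a S b T
    using equiv assms(2,3) that rM_equiv_iff_frag_equiv by blast+
  then have "comp_equiv arX G r M {} {} m (\<lambda>_. undefined) (\<lambda>_. {}) m' (\<lambda>_. undefined) (\<lambda>_. {})"
    using equiv assms by (auto simp: comp_equiv_def)
  then have "frag_equiv r M {} {} (compose arX G m) (\<lambda>_. undefined) (\<lambda>_. {})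
      (compose arX G m') (\<lambda>_. undefined) (\<lambda>_. {})"
    unfolding frag_equiv_def using compose_sat_eq by blast
  then show "rM_equiv r M (compose arX G m) (compose arX G m')"
    using rM_equiv_iff_frag_equiv by blast
qed

lemma iso_model_refl: "iso_model A A"
  unfolding iso_model_def by (intro exI[of _ id]) simp

theorem lemma5p13:
  fixes S :: "'s set" and arS :: "'s \<Rightarrow> nat"
    and X :: "'x set" and arX :: "'x \<Rightarrow> nat"
    and G :: "('w, 'x) hg"
  assumes "finite S" and "ranked S arS" and "ranked X arX"
    and "wf_hg X arX G"
  shows "\<exists>f :: ('x \<Rightarrow> ('v \<times> nat, ('s \<times> nat) + nat) model)
                \<Rightarrow> (('w \<times> 'v) \<times> nat, ('s \<times> nat) + nat) model.
           cmso_compatible X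
             (\<lambda>x. {to_model arS H | H :: ('v, 's) hg. wf_hg S arS H \<and> harity H = arX x}) f \<and>
           (\<forall>\<eta> :: 'x \<Rightarrow> ('v, 's) hg. valuation S arS X arX \<eta> \<longrightarrow>
              iso_model (f (\<lambda>x. to_model arS (\<eta> x))) (to_model arS (flatten arS G \<eta>)))"
proof (intro exI conjI allI impI)
  show "cmso_compatible X
      (\<lambda>x. {to_model arS H | H :: ('v, 's) hg. wf_hg S arS H \<and> harity H = arX x}) (compose arX G)"
    using \<open>wf_hg X arX G\<close>
    by (intro cmso_compatible_compose) (auto simp: wf_hg_def to_model_def finite_corners)
  fix \<eta> :: "'x \<Rightarrow> ('v, 's) hg"
  assume "valuation S arS X arX \<eta>"
  then show "iso_model (compose arX G (\<lambda>x. to_model arS (\<eta> x))) (to_model arS (flatten arS G \<eta>))"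
    using \<open>wf_hg X arX G\<close> by (simp add: compose_to_model_flatten iso_model_refl)
qed

end
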